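(* Let $\mathcal{H},\mathcal{K}$ be complex Hilbert spaces and $(f_*,f^* ):(\mathsf{P}(\mathcal{H}),\mathsf{L}(\mathcal{H}),\bar e_{\mathcal{H}})\to(\mathsf{P}(\mathcal{K}),\mathsf{L}(\mathcal{K}),\bar e_{\mathcal{K}})$ a Chu morphism. Then for every nonzero $\psi\in\mathcal{H}$ and every $S\in\mathsf{L}(\mathcal{K})$: $[\psi]\subseteq f^*(S)$ if and only if $f_*([\psi])\subseteq S$.
   Context: A Chu morphism $(X,A,e)\to(X',A',e')$ between Chu spaces over $[0,1]$ is a pair $(f_*:X\to X',f^*:A'\to A)$ with $e(x,f^*(a'))=e'(f_*(x),a')$ for all $x,a'$. For a complex Hilbert space $\mathcal{H}$: $\mathsf{L}(\mathcal{H})$ is the set of closed subspaces, $P_S$ the orthogonal projector onto $S$, $\mathsf{P}(\mathcal{H})$ the set of rays $[\psi]=\{\lambda\psi:\lambda\in\mathbb{C}\}$, $\psi\ne0$, and $\bar e_{\mathcal{H}}([\psi],S)=\|P_S\psi\|^2/\|\psi\|^2$. *)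

theory Defs
  imports "HOL-Analysis.Analysis"
begin

text \<open>The (real) inner product is the real part of the complex inner product, which is
recovered by polarization.\<close>

class complex_hilbert = real_inner + complete_space +
  fixes scaleC :: "complex \<Rightarrow> 'a \<Rightarrow> 'a" (infixr \<open>*\<^sub>C\<close> 75)
  assumes scaleC_of_real: "scaleC (complex_of_real r) x = scaleR r x"
    and scaleC_add_left: "scaleC (a + b) x = scaleC a x + scaleC b x"
    and scaleC_add_right: "scaleC a (x + y) = scaleC a x + scaleC a y"
    and scaleC_scaleC: "scaleC a (scaleC b x) = scaleC (a * b) x"
    and scaleC_one: "scaleC 1 x = x"
    and norm_scaleC: "norm (scaleC a x) = cmod a * norm x"

definition csubspace :: "'a::complex_hilbert set \<Rightarrow> bool" where
  "csubspace S \<longleftrightarrow> 0 \<in> S \<and> (\<forall>x\<in>S. \<forall>y\<in>S. x + y \<in> S) \<and> (\<forall>c. \<forall>x\<in>S. c *\<^sub>C x \<in> S)"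

definition closed_subspaces :: "'a::complex_hilbert set set" where
  "closed_subspaces = {S. csubspace S \<and> closed S}"

definition proj :: "'a::complex_hilbert set \<Rightarrow> 'a \<Rightarrow> 'a" where
  "proj S x = (THE p. p \<in> S \<and> (\<forall>s\<in>S. inner (x - p) s = 0))"

definition ray :: "'a::complex_hilbert \<Rightarrow> 'a set" where
  "ray \<psi> = {c *\<^sub>C \<psi> | c. True}"

definition rays :: "'a::complex_hilbert set set" where
  "rays = {ray \<psi> | \<psi>. \<psi> \<noteq> 0}"

text \<open>The evaluation ebar([psi],S) = ||P_S psi||^2 / ||psi||^2 (independent of representative).\<close>
definition ebar :: "'a::complex_hilbert set \<Rightarrow> 'a set \<Rightarrow> real" where
  "ebar R S = (let \<psi> = (SOME \<psi>. \<psi> \<noteq> 0 \<and> R = ray \<psi>) in (norm (proj S \<psi>))\<^sup>2 / (norm \<psi>)\<^sup>2)"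

definition chu_morphism ::
  "'x set \<Rightarrow> 'a set \<Rightarrow> ('x \<Rightarrow> 'a \<Rightarrow> real) \<Rightarrow> 'y set \<Rightarrow> 'b set \<Rightarrow> ('y \<Rightarrow> 'b \<Rightarrow> real)
    \<Rightarrow> ('x \<Rightarrow> 'y) \<Rightarrow> ('b \<Rightarrow> 'a) \<Rightarrow> bool" where
  "chu_morphism X A e X' A' e' fl fu \<longleftrightarrow>
     (\<forall>x\<in>X. fl x \<in> X') \<and> (\<forall>a'\<in>A'. fu a' \<in> A) \<and>
     (\<forall>x\<in>X. \<forall>a'\<in>A'. e x (fu a') = e' (fl x) a')"

end

theory Submission
  imports Defs
begin

text \<open>A ray R lies in a closed subspace T exactly when ebar R T = 1: writing R = [\<phi>],
Pythagoras gives |P_T \<phi>|^2 + |\<phi> - P_T \<phi>|^2 = |\<phi>|^2, so the quotient is 1 iff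
P_T \<phi> = \<phi>. Since a Chu morphism preserves the value of the evaluation,
[\<psi>] \<subseteq> f^*(S) iff ebar([\<psi>], f^*(S)) = 1 iff ebar(f_*([\<psi>]), S) = 1 iff f_*([\<psi>]) \<subseteq> S.
The work lies in constructing the orthogonal projection: a minimizing sequence for the
distance to a closed convex set is Cauchy by the parallelogram law, its limit is the nearest
point, and for a subspace the nearest point is characterized by orthogonality.\<close>

lemma parallelogram_law:
  fixes a b :: "'a::real_inner"
  shows "(norm (a - b))\<^sup>2 + (norm (a + b))\<^sup>2 = 2 * (norm a)\<^sup>2 + 2 * (norm b)\<^sup>2"
  by (simp add: power2_norm_eq_inner inner_add inner_diff inner_commute)

lemma obtain_minimizing_sequence:
  assumes "A \<noteq> {}"
  obtains s where "\<And>n. s n \<in> A" "(\<lambda>n. dist x (s n)) \<longlonglongrightarrow> infdist x A"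
proof -
  have "\<exists>a\<in>A. dist x a < infdist x A + inverse (real (Suc n))" for n
  proof -
    have "(INF a\<in>A. dist x a) < infdist x A + inverse (real (Suc n))"
      using assms by (simp add: infdist_notempty)
    then show ?thesis
      by (simp add: cINF_less_iff[OF assms bdd_below_image_dist])
  qed
  then obtain s where s: "\<And>n. s n \<in> A"
    and less: "\<And>n. dist x (s n) < infdist x A + inverse (real (Suc n))"
    by metis
  have "(\<lambda>n. dist x (s n)) \<longlonglongrightarrow> infdist x A"
  proof (rule tendsto_sandwich)
    show "\<forall>\<^sub>F n in sequentially. infdist x A \<le> dist x (s n)"
      using s by (simp add: infdist_le)
    show "\<forall>\<^sub>F n in sequentially. dist x (s n) \<le> infdist x A + inverse (real (Suc n))"
      using less by (simp add: less_imp_le)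
    show "(\<lambda>n. infdist x A + inverse (real (Suc n))) \<longlonglongrightarrow> infdist x A"
      by (rule LIMSEQ_inverse_real_of_nat_add)
  qed simp
  with s show ?thesis by (rule that)
qed

lemma minimizing_sequence_Cauchy:
  fixes x :: "'a::real_inner"
  assumes "convex C" and s: "\<And>n. s n \<in> C"
    and lim: "(\<lambda>n. dist x (s n)) \<longlonglongrightarrow> infdist x C"
  shows "Cauchy s"
proof (rule CauchyI)
  fix r :: real assume "r > 0"
  define d where "d = infdist x C"
  have bound: "(norm (s m - s n))\<^sup>2 \<le> 2 * (dist x (s m))\<^sup>2 + 2 * (dist x (s n))\<^sup>2 - 4 * d\<^sup>2"
    for m n
  proof -
    define mid where "mid = (1/2::real) *\<^sub>R s m + (1/2::real) *\<^sub>R s n"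
    have "mid \<in> C"
      unfolding mid_def using \<open>convex C\<close> s by (intro convexD) auto
    then have "d \<le> dist x mid"
      unfolding d_def by (rule infdist_le)
    moreover have "(x - s m) + (x - s n) = 2 *\<^sub>R (x - mid)"
      unfolding mid_def by (simp add: algebra_simps scaleR_2)
    ultimately have "2 * d \<le> norm ((x - s m) + (x - s n))"
      by (simp add: dist_norm)
    then have "(2 * d)\<^sup>2 \<le> (norm ((x - s m) + (x - s n)))\<^sup>2"
      using infdist_nonneg[of x C] unfolding d_def by (intro power_mono) auto
    moreover have "(x - s m) - (x - s n) = s n - s m"
      by simp
    ultimately show ?thesis
      using parallelogram_law[of "x - s m" "x - s n"]
      by (simp add: dist_norm norm_minus_commute)
  qed
  have "(\<lambda>n. (dist x (s n))\<^sup>2) \<longlonglongrightarrow> d\<^sup>2"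
    unfolding d_def by (intro tendsto_intros lim)
  moreover have "r\<^sup>2 / 4 > 0"
    using \<open>r > 0\<close> by simp
  ultimately obtain N where N: "\<And>n. n \<ge> N \<Longrightarrow> \<bar>(dist x (s n))\<^sup>2 - d\<^sup>2\<bar> < r\<^sup>2 / 4"
    unfolding LIMSEQ_iff real_norm_def by blast
  show "\<exists>M. \<forall>m\<ge>M. \<forall>n\<ge>M. norm (s m - s n) < r"
  proof (intro exI allI impI)
    fix m n assume "N \<le> m" "N \<le> n"
    then have "(dist x (s m))\<^sup>2 < d\<^sup>2 + r\<^sup>2 / 4" "(dist x (s n))\<^sup>2 < d\<^sup>2 + r\<^sup>2 / 4"
      using N[OF \<open>N \<le> m\<close>] N[OF \<open>N \<le> n\<close>] unfolding abs_less_iff by linarith+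
    then have "(norm (s m - s n))\<^sup>2 < r\<^sup>2"
      using bound[of m n] by linarith
    then show "norm (s m - s n) < r"
      using \<open>r > 0\<close> by (simp add: power_less_imp_less_base[of _ 2 r])
  qed
qed

lemma closed_convex_nearest_point_exists:
  fixes x :: "'a::{real_inner,complete_space}"
  assumes "closed C" "convex C" "C \<noteq> {}"
  obtains p where "p \<in> C" "dist x p = infdist x C"
proof -
  obtain s where s: "\<And>n. s n \<in> C" and lim: "(\<lambda>n. dist x (s n)) \<longlonglongrightarrow> infdist x C"
    using obtain_minimizing_sequence[OF \<open>C \<noteq> {}\<close>] by metis
  have "Cauchy s"
    using minimizing_sequence_Cauchy[OF \<open>convex C\<close> s lim] .
  then obtain p where p: "s \<longlonglongrightarrow> p"
    using Cauchy_convergent_iff convergent_def by blast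
  have "p \<in> C"
    using \<open>closed C\<close> s p closed_sequentially by blast
  moreover have "(\<lambda>n. dist x (s n)) \<longlonglongrightarrow> dist x p"
    by (intro tendsto_intros p)
  then have "dist x p = infdist x C"
    using lim by (rule LIMSEQ_unique)
  ultimately show ?thesis by (rule that)
qed

lemma nearest_point_subspace_orthogonal:
  fixes x :: "'a::real_inner"
  assumes "subspace T" "p \<in> T" "dist x p = infdist x T" "q \<in> T"
  shows "inner (x - p) q = 0"
proof (cases "q = 0")
  case False
  define r where "r = x - p"
  define t where "t = inner r q / (norm q)\<^sup>2"
  have "p + t *\<^sub>R q \<in> T"
    using assms by (simp add: subspace_add subspace_scale)
  then have "dist x p \<le> dist x (p + t *\<^sub>R q)"
    using assms(3) by (simp add: infdist_le)
  then have "(norm r)\<^sup>2 \<le> (norm (r - t *\<^sub>R q))\<^sup>2"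
    unfolding r_def dist_norm by (simp add: algebra_simps)
  also have "\<dots> = (norm r)\<^sup>2 - 2 * t * inner r q + t * t * (norm q)\<^sup>2"
    by (simp add: power2_norm_eq_inner inner_diff inner_commute algebra_simps)
  also have "\<dots> = (norm r)\<^sup>2 - (inner r q)\<^sup>2 / (norm q)\<^sup>2"
    using False unfolding t_def by (simp add: field_simps power2_eq_square)
  finally have "(inner r q)\<^sup>2 \<le> 0"
    using False by (simp add: divide_le_0_iff)
  then show ?thesis
    unfolding r_def by simp
qed simp

lemma closed_subspace_orthogonal_projection:
  fixes x :: "'a::{real_inner,complete_space}"
  assumes "subspace T" "closed T"
  shows "\<exists>!p. p \<in> T \<and> (\<forall>s\<in>T. inner (x - p) s = 0)"
proof -
  have "T \<noteq> {}"
    using subspace_0[OF assms(1)] by blast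
  with assms(2) subspace_imp_convex[OF assms(1)]
  obtain p where p: "p \<in> T" "dist x p = infdist x T"
    by (rule closed_convex_nearest_point_exists)
  have orth: "inner (x - p) s = 0" if "s \<in> T" for s
    using nearest_point_subspace_orthogonal[OF assms(1) p that] .
  show ?thesis
  proof (intro ex1I conjI ballI)
    show "p \<in> T" "\<And>s. s \<in> T \<Longrightarrow> inner (x - p) s = 0"
      using p(1) orth by auto
  next
    fix q assume q: "q \<in> T \<and> (\<forall>s\<in>T. inner (x - q) s = 0)"
    have "p - q \<in> T"
      using assms(1) p(1) q by (simp add: subspace_diff)
    then have "inner (p - q) (p - q) = inner (x - q) (p - q) - inner (x - p) (p - q)"
      by (simp add: inner_diff_left)
    also have "\<dots> = 0"
      using q orth \<open>p - q \<in> T\<close> by simp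
    finally show "q = p"
      by simp
  qed
qed

lemma csubspace_imp_subspace:
  assumes "csubspace S"
  shows "subspace S"
proof -
  have "c *\<^sub>R x \<in> S" if "x \<in> S" for c x
    using assms that unfolding csubspace_def scaleC_of_real[symmetric] by blast
  with assms show ?thesis
    unfolding csubspace_def subspace_def by blast
qed

lemma proj_in_and_orthogonal:
  assumes "T \<in> closed_subspaces"
  shows "proj T x \<in> T \<and> (\<forall>s\<in>T. inner (x - proj T x) s = 0)"
proof -
  have "subspace T" "closed T"
    using assms by (auto simp: closed_subspaces_def csubspace_imp_subspace)
  then show ?thesis
    unfolding proj_def by (rule theI'[OF closed_subspace_orthogonal_projection])
qed

lemma norm_proj_eq_iff:
  assumes "T \<in> closed_subspaces"
  shows "norm (proj T x) = norm x \<longleftrightarrow> x \<in> T"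
proof -
  let ?p = "proj T x"
  have "subspace T"
    using assms by (simp add: closed_subspaces_def csubspace_imp_subspace)
  have p: "?p \<in> T" "\<forall>s\<in>T. inner (x - ?p) s = 0"
    using proj_in_and_orthogonal[OF assms] by auto
  then have "inner (x - ?p) ?p = 0"
    by blast
  then have "inner ?p x = inner ?p ?p"
    by (simp add: inner_diff inner_commute)
  then have pythagoras: "(norm x)\<^sup>2 = (norm ?p)\<^sup>2 + (norm (x - ?p))\<^sup>2"
    by (simp add: power2_norm_eq_inner inner_diff inner_commute)
  show ?thesis
  proof
    assume "norm ?p = norm x"
    then have "norm (x - ?p) = 0"
      using pythagoras by simp
    then have "x = ?p"
      by simp
    then show "x \<in> T"
      using p by simp
  next
    assume "x \<in> T"
    with \<open>subspace T\<close> p(1) have "x - ?p \<in> T"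
      by (simp add: subspace_diff)
    then have "inner (x - ?p) (x - ?p) = 0"
      using p(2) by blast
    then have "x = ?p"
      by simp
    then show "norm ?p = norm x"
      by simp
  qed
qed

lemma ray_subset_iff:
  assumes "csubspace T"
  shows "ray \<psi> \<subseteq> T \<longleftrightarrow> \<psi> \<in> T"
proof
  have "1 *\<^sub>C \<psi> \<in> ray \<psi>"
    unfolding ray_def by blast
  then show "ray \<psi> \<subseteq> T \<Longrightarrow> \<psi> \<in> T"
    by (auto simp: scaleC_one)
  show "\<psi> \<in> T \<Longrightarrow> ray \<psi> \<subseteq> T"
    using assms unfolding ray_def csubspace_def by blast
qed

lemma ebar_eq_1_iff_subset:
  assumes "R \<in> rays" "T \<in> closed_subspaces"
  shows "ebar R T = 1 \<longleftrightarrow> R \<subseteq> T"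
proof -
  define \<phi> where "\<phi> = (SOME \<phi>. \<phi> \<noteq> 0 \<and> R = ray \<phi>)"
  have "\<exists>\<phi>. \<phi> \<noteq> 0 \<and> R = ray \<phi>"
    using assms(1) unfolding rays_def by blast
  then have \<phi>: "\<phi> \<noteq> 0" "R = ray \<phi>"
    unfolding \<phi>_def by (rule someI_ex[THEN conjunct1], rule someI_ex[THEN conjunct2])
  have "ebar R T = (norm (proj T \<phi>))\<^sup>2 / (norm \<phi>)\<^sup>2"
    unfolding ebar_def \<phi>_def Let_def ..
  then have "ebar R T = 1 \<longleftrightarrow> (norm (proj T \<phi>))\<^sup>2 = (norm \<phi>)\<^sup>2"
    using \<phi>(1) by (simp only: divide_eq_1_iff) simp
  also have "\<dots> \<longleftrightarrow> norm (proj T \<phi>) = norm \<phi>"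
    by (rule power2_eq_iff_nonneg) simp_all
  also have "\<dots> \<longleftrightarrow> \<phi> \<in> T"
    by (rule norm_proj_eq_iff[OF assms(2)])
  also have "\<dots> \<longleftrightarrow> R \<subseteq> T"
    using assms(2) unfolding \<phi>(2) closed_subspaces_def by (simp add: ray_subset_iff)
  finally show ?thesis .
qed

theorem proposition3p4:
  fixes fl :: "'a::complex_hilbert set \<Rightarrow> 'b::complex_hilbert set"
    and fu :: "'b set \<Rightarrow> 'a set"
    and \<psi> :: 'a and S :: "'b set"
  assumes "chu_morphism (rays :: 'a set set) (closed_subspaces :: 'a set set) ebar
             (rays :: 'b set set) (closed_subspaces :: 'b set set) ebar fl fu"
    and "\<psi> \<noteq> 0"
    and "S \<in> closed_subspaces"
  shows "ray \<psi> \<subseteq> fu S \<longleftrightarrow> fl (ray \<psi>) \<subseteq> S"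
proof -
  have "ray \<psi> \<in> rays"
    using assms(2) unfolding rays_def by blast
  then have "fu S \<in> closed_subspaces" "fl (ray \<psi>) \<in> rays"
    and preserved: "ebar (ray \<psi>) (fu S) = ebar (fl (ray \<psi>)) S"
    using assms(1,3) unfolding chu_morphism_def by auto
  have "ray \<psi> \<subseteq> fu S \<longleftrightarrow> ebar (ray \<psi>) (fu S) = 1"
    using ebar_eq_1_iff_subset[OF \<open>ray \<psi> \<in> rays\<close> \<open>fu S \<in> closed_subspaces\<close>] by simp
  also have "\<dots> \<longleftrightarrow> ebar (fl (ray \<psi>)) S = 1"
    using preserved by simp
  also have "\<dots> \<longleftrightarrow> fl (ray \<psi>) \<subseteq> S"
    using ebar_eq_1_iff_subset[OF \<open>fl (ray \<psi>) \<in> rays\<close> assms(3)] .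
  finally show ?thesis .
qed

end
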